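(* Let $\lambda\in(1/2,1)$ be the reciprocal of a Garsia number. Let $X=[0,1]^2$, let $S_0,S_1:X\to X$ be given by $S_0(x)=\lambda x$ and $S_1(x)=\lambda x+(1-\lambda,0)$, let $C=\{0\}\times[0,1]$, and let $F_C^\lambda$ be the unique non-empty compact set satisfying $F_C^\lambda=S_0(F_C^\lambda)\cup S_1(F_C^\lambda)\cup C$. Then the box dimension of $F_C^\lambda$ exists and \[ \dim_{\mathrm B} F_C^\lambda=\frac{\log(4\lambda)}{\log 2}>1. \]
   Context: A Garsia number is a positive real algebraic integer with norm $\pm2$ all of whose Galois conjugates have modulus strictly greater than $1$. For bounded $E\subseteq\mathbb{R}^n$ and $\delta>0$, $N_\delta(E)$ is the number of half-open cubes (products of half-open intervals $[a,b)$) of the $\delta$-mesh aligned with the coordinate axes that intersect $E$; the upper and lower box dimensions are $\limsup_{\delta\to0}$ and $\liminf_{\delta\to0}$ of $\log N_\delta(E)/(-\log\delta)$, and the box dimension $\dim_{\mathrm B}E$ is their common value when they agree. *)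

theory Defs
  imports "HOL-Analysis.Analysis" "HOL-Computational_Algebra.Polynomial"
    "HOL-Library.Extended_Real"
begin

definition garsia_number :: "real \<Rightarrow> bool" where
  "garsia_number x \<longleftrightarrow> x > 0 \<and>
     (\<exists>p :: int poly. lead_coeff p = 1 \<and> irreducible p \<and>
        poly (map_poly of_int p) x = 0 \<and>
        \<bar>coeff p 0\<bar> = 2 \<and>
        (\<forall>z :: complex. poly (map_poly of_int p) z = 0 \<longrightarrow> cmod z > 1))"

text \<open>Number of half-open cubes \<open>[k\<delta>,(k+1)\<delta>) \<times> [l\<delta>,(l+1)\<delta>)\<close> of the
  \<open>\<delta>\<close>-mesh meeting \<open>E \<subseteq> \<real>\<^sup>2\<close>.\<close>
definition mesh_count :: "real \<Rightarrow> (real \<times> real) set \<Rightarrow> nat" where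
  "mesh_count \<delta> E = card ((\<lambda>p. (\<lfloor>fst p / \<delta>\<rfloor>, \<lfloor>snd p / \<delta>\<rfloor>)) ` E)"

definition upper_box_dim :: "(real \<times> real) set \<Rightarrow> ereal" where
  "upper_box_dim E = Limsup (at_right 0)
     (\<lambda>\<delta>. ereal (ln (real (mesh_count \<delta> E)) / (- ln \<delta>)))"

definition lower_box_dim :: "(real \<times> real) set \<Rightarrow> ereal" where
  "lower_box_dim E = Liminf (at_right 0)
     (\<lambda>\<delta>. ereal (ln (real (mesh_count \<delta> E)) / (- ln \<delta>)))"

end

theory Submission
  imports Defs "HOL-Real_Asymp.Real_Asymp" "Subresultants.Subresultant_Gcd"
    "Berlekamp_Zassenhaus.Mahler_Measure"
begin

text \<open>For a word \<open>w\<close> over \<open>{0,1}\<close> let \<open>x\<^sub>w\<close> be the first coordinate of \<open>S\<^sub>w(0)\<close>. The set \<open>F\<close>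
  contains the vertical segments \<open>{x\<^sub>w} \<times> [0, \<lambda>\<^bsup>|w|\<^esup>]\<close> and is covered by the segments with
  \<open>|w| < n\<close> together with the strip \<open>[0,1] \<times> [0, \<lambda>\<^sup>n]\<close>.
  For words of equal length \<open>k\<close>, \<open>x\<^sub>v - x\<^sub>w = (1 - \<lambda>) \<lambda>\<^sup>k R(1/\<lambda>)\<close> with \<open>R\<close> a nonzero polynomial
  with coefficients in \<open>{-1,0,1}\<close>. Since \<open>1/\<lambda>\<close> is a Garsia number, the resultant of \<open>R\<close> with the
  minimal polynomial of \<open>1/\<lambda>\<close> is a nonzero integer; it is the product of \<open>R\<close> over the conjugates,
  and bounding \<open>R\<close> at the other conjugates (all of modulus \<open>> 1\<close>) by a geometric sum shows that
  the \<open>2\<^sup>k\<close> points \<open>x\<^sub>w\<close> are \<open>c 2\<^sup>-\<^sup>k\<close>-separated. At scale \<open>\<delta> \<approx> c 2\<^sup>-\<^sup>k\<close> the \<open>2\<^sup>k\<close> segments of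
  level \<open>k\<close> therefore meet at least \<open>(2\<lambda>)\<^sup>k/\<delta>\<close> boxes, which is \<open>\<delta>\<^bsup>-D\<^esup>\<close> up to a constant, with
  \<open>D = log(4\<lambda>)/log 2\<close>. Conversely, the segments of level \<open>j\<close> meet at most
  \<open>min(2\<^sup>j, 2/\<delta>) \<sqdot> 2\<lambda>\<^sup>j/\<delta> \<le> (2/\<delta>)\<^bsup>D\<^esup>\<close> boxes, and only the \<open>O(log(1/\<delta>))\<close> levels with \<open>\<lambda>\<^sup>j > \<delta>\<close> matter.\<close>

section \<open>Resultants through complex roots\<close>

lemma prod_list_const_mult:
  "(\<Prod>x\<leftarrow>xs. c * f x) = c ^ length xs * (\<Prod>x\<leftarrow>xs. f x)" for c :: "'a::comm_monoid_mult"
  by (induct xs) (auto simp: ac_simps)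

lemma prod_list_mult_distrib:
  "(\<Prod>x\<leftarrow>xs. f x * g x) = (\<Prod>x\<leftarrow>xs. f x) * (\<Prod>x\<leftarrow>xs. g x)"
  for f g :: "_ \<Rightarrow> 'a::comm_monoid_mult"
  by (induct xs) (auto simp: ac_simps)

lemma prod_list_swap:
  "(\<Prod>x\<leftarrow>xs. \<Prod>y\<leftarrow>ys. f x y) = (\<Prod>y\<leftarrow>ys. \<Prod>x\<leftarrow>xs. f x y)"
  for f :: "_ \<Rightarrow> _ \<Rightarrow> 'a::comm_monoid_mult"
  by (induct xs) (simp_all add: map_replicate_const prod_list_mult_distrib)

lemma norm_prod_list: "norm (\<Prod>x\<leftarrow>xs. f x) = (\<Prod>x\<leftarrow>xs. norm (f x))"
  for f :: "_ \<Rightarrow> 'a::real_normed_field"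
  by (induct xs) (auto simp: norm_mult)

lemma prod_list_mono:
  fixes f g :: "_ \<Rightarrow> real"
  assumes "\<And>x. x \<in> set xs \<Longrightarrow> 0 \<le> f x \<and> f x \<le> g x"
  shows "(\<Prod>x\<leftarrow>xs. f x) \<le> (\<Prod>x\<leftarrow>xs. g x)"
  using assms by (induct xs) (auto intro!: mult_mono prod_list_nonneg intro: order_trans)

lemma prod_list_pos:
  "(\<And>x. x \<in> set xs \<Longrightarrow> 0 < f x) \<Longrightarrow> 0 < (\<Prod>x\<leftarrow>xs. f x :: real)"
  by (induct xs) auto

abbreviation croots :: "complex poly \<Rightarrow> complex list" where
  "croots \<equiv> complex_roots_complex"

lemma poly_eq_lead_coeff_prod_croots: "poly p x = lead_coeff p * (\<Prod>b\<leftarrow>croots p. x - b)"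
proof -
  have "poly p x = poly (Polynomial.smult (lead_coeff p) (\<Prod>a\<leftarrow>croots p. [:- a, 1:])) x"
    by (simp only: complex_roots(1))
  then show ?thesis by (simp add: poly_prod_list o_def)
qed

lemma poly_eq_0_if_mem_croots: "b \<in> set (croots p) \<Longrightarrow> poly p b = 0"
  by (simp add: poly_eq_lead_coeff_prod_croots prod_list_zero_iff)

lemma norm_prod_croots:
  assumes "lead_coeff p = 1"
  shows "(\<Prod>b\<leftarrow>croots p. cmod b) = cmod (Polynomial.coeff p 0)"
proof -
  have "Polynomial.coeff p 0 = (\<Prod>b\<leftarrow>croots p. - b)"
    using poly_eq_lead_coeff_prod_croots[of p 0] assms by (simp add: poly_0_coeff_0)
  then show ?thesis by (simp add: norm_prod_list)
qed

definition root_resultant :: "complex poly \<Rightarrow> complex poly \<Rightarrow> real" where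
  "root_resultant g f = cmod (lead_coeff g) ^ degree f * (\<Prod>b\<leftarrow>croots g. cmod (poly f b))"

lemma root_resultant_eq_prod_root_differences:
  "root_resultant g f = cmod (lead_coeff g) ^ degree f * cmod (lead_coeff f) ^ degree g *
     (\<Prod>b\<leftarrow>croots g. \<Prod>a\<leftarrow>croots f. cmod (b - a))"
  unfolding root_resultant_def poly_eq_lead_coeff_prod_croots[of f]
  by (simp add: norm_mult norm_prod_list prod_list_const_mult complex_roots(2) mult.assoc)

lemma root_resultant_commute: "root_resultant g f = root_resultant f g"
proof -
  have "(\<Prod>b\<leftarrow>croots g. \<Prod>a\<leftarrow>croots f. cmod (b - a)) = (\<Prod>a\<leftarrow>croots f. \<Prod>b\<leftarrow>croots g. cmod (a - b))"
    by (subst prod_list_swap) (simp add: norm_minus_commute)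
  then show ?thesis
    unfolding root_resultant_eq_prod_root_differences[of g f] root_resultant_eq_prod_root_differences[of f g]
    by (simp add: ac_simps)
qed

lemma root_resultant_mod:
  assumes "degree (f mod g) \<le> degree f"
  shows "root_resultant g f = cmod (lead_coeff g) ^ (degree f - degree (f mod g)) * root_resultant g (f mod g)"
proof -
  have "poly f b = poly (f mod g) b" if "b \<in> set (croots g)" for b
    using poly_eq_0_if_mem_croots[OF that] div_mult_mod_eq[of f g] by (metis add_0 mult_zero_right poly_add poly_mult)
  then have "(\<Prod>b\<leftarrow>croots g. cmod (poly f b)) = (\<Prod>b\<leftarrow>croots g. cmod (poly (f mod g) b))"
    by (intro arg_cong[where f = prod_list] map_cong) auto
  then show ?thesis
    using assms by (simp add: root_resultant_def mult.assoc flip: power_add)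
qed

lemma norm_resultant_division_step:
  fixes f g :: "complex poly"
  assumes IH: "\<And>f' g'. f' \<noteq> 0 \<Longrightarrow> g' \<noteq> 0 \<Longrightarrow> degree f' + degree g' < degree f + degree g
      \<Longrightarrow> cmod (resultant f' g') = root_resultant g' f'"
    and "g \<noteq> 0" and deg: "degree g \<le> degree f"
  shows "cmod (resultant f g) = root_resultant g f"
proof (cases "degree g = 0")
  case True
  then obtain c where "g = [:c:]" by (auto elim: degree_eq_zeroE)
  then show ?thesis by (simp add: root_resultant_def norm_power)
next
  case False
  define h where "h = f mod g"
  have division: "f + (- (f div g)) * g = h"
    unfolding h_def by (metis add_diff_cancel_left' diff_conv_add_uminus div_mult_mod_eq minus_mult_left)
  have "degree h < degree g"
    unfolding h_def using False \<open>g \<noteq> 0\<close> degree_mod_less' by (cases "f mod g = 0") auto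
  then have choice: "degree h < degree g \<or> h = 0 \<and> f \<noteq> 0 \<and> g \<noteq> 0" by simp
  have rr: "root_resultant g f = cmod (lead_coeff g) ^ (degree f - degree h) * root_resultant g h"
    unfolding h_def by (rule root_resultant_mod) (use \<open>degree h < degree g\<close> deg in \<open>simp add: h_def\<close>)
  show ?thesis
  proof (cases "degree h = 0")
    case True
    then obtain c where c: "h = [:c:]" by (auto elim: degree_eq_zeroE)
    have "subresultant 0 f g = Polynomial.smult ((- 1) ^ (degree f * degree g) * lead_coeff g ^ degree f * c ^ (degree g - 1)) h"
      using BT_lemma_1_13[OF division deg choice] True c \<open>degree g \<noteq> 0\<close> by simp
    then have "cmod (resultant f g) = cmod (lead_coeff g) ^ degree f * (cmod c ^ (degree g - 1) * cmod c)"
      by (simp add: c norm_mult norm_power flip: coeff_subresultant_0_0_resultant)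
    also have "cmod c ^ (degree g - 1) * cmod c = cmod c ^ degree g"
      using False by (cases "degree g") auto
    finally show ?thesis
      unfolding rr using True by (simp add: c root_resultant_def map_replicate_const complex_roots(2))
  next
    case False
    then have "h \<noteq> 0" by auto
    have "subresultant 0 f g = Polynomial.smult ((- 1) ^ (degree f * degree g) * lead_coeff g ^ (degree f - degree h))
        (subresultant 0 g h)"
      using BT_lemma_1_12[OF division deg choice, of 0] False by simp
    then have "cmod (resultant f g) = cmod (lead_coeff g) ^ (degree f - degree h) * cmod (resultant g h)"
      by (simp add: norm_mult norm_power flip: coeff_subresultant_0_0_resultant)
    also have "cmod (resultant g h) = root_resultant g h"
      using IH[OF \<open>g \<noteq> 0\<close> \<open>h \<noteq> 0\<close>] \<open>degree h < degree g\<close> deg root_resultant_commute by simp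
    finally show ?thesis using rr by simp
  qed
qed

lemma norm_resultant_eq_root_resultant:
  fixes f g :: "complex poly"
  shows "f \<noteq> 0 \<Longrightarrow> g \<noteq> 0 \<Longrightarrow> cmod (resultant f g) = root_resultant g f"
proof (induction "degree f + degree g" arbitrary: f g rule: less_induct)
  case less
  show ?case
  proof (cases "degree g \<le> degree f")
    case True
    show ?thesis by (rule norm_resultant_division_step[OF less.hyps less.prems(2) True]) auto
  next
    case False
    have "cmod (resultant f g) = cmod (resultant g f)"
      by (subst resultant_swap) (simp add: norm_mult norm_power)
    also have "\<dots> = root_resultant f g"
      by (rule norm_resultant_division_step[OF _ less.prems(1)]) (use False less.hyps in auto)
    finally show ?thesis by (simp add: root_resultant_commute)
  qed
qed

section \<open>Polynomials with coefficients in \<open>{-1, 0, 1}\<close> at a Garsia number\<close>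

text \<open>The lowest nonzero coefficient of \<open>p * q\<close> is \<open>coeff p 0\<close> times the lowest nonzero
  coefficient of \<open>q\<close>, hence even.\<close>
lemma not_dvd_if_coeffs_abs_le_1:
  fixes p r :: "int poly"
  assumes p0: "\<bar>Polynomial.coeff p 0\<bar> = 2" and "r \<noteq> 0"
    and r_coeffs: "\<And>i. \<bar>Polynomial.coeff r i\<bar> \<le> 1"
  shows "\<not> p dvd r"
proof
  assume "p dvd r"
  then obtain q where q: "r = p * q" by (auto elim: dvdE)
  with \<open>r \<noteq> 0\<close> have "q \<noteq> 0" by auto
  then obtain i where "Polynomial.coeff q i \<noteq> 0" by (metis leading_coeff_0_iff)
  define k where "k = (LEAST i. Polynomial.coeff q i \<noteq> 0)"
  have qk: "Polynomial.coeff q k \<noteq> 0"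
    unfolding k_def by (rule LeastI) fact
  have below_k: "Polynomial.coeff q j = 0" if "j < k" for j
    using not_less_Least[of j "\<lambda>i. Polynomial.coeff q i \<noteq> 0"] that unfolding k_def by auto
  have "Polynomial.coeff r k = (\<Sum>j\<le>k. Polynomial.coeff p j * Polynomial.coeff q (k - j))"
    unfolding q by (rule coeff_mult)
  also have "\<dots> = (\<Sum>j\<in>{0}. Polynomial.coeff p j * Polynomial.coeff q (k - j))"
    by (rule sum.mono_neutral_right) (auto simp: below_k)
  finally have "\<bar>Polynomial.coeff r k\<bar> = 2 * \<bar>Polynomial.coeff q k\<bar>" by (simp add: abs_mult p0)
  with qk r_coeffs[of k] show False by linarith
qed

lemma resultant_nonzero_if_coeffs_abs_le_1:
  fixes p r :: "int poly"
  assumes "irreducible p" and "\<bar>Polynomial.coeff p 0\<bar> = 2" and "r \<noteq> 0"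
    and "\<And>i. \<bar>Polynomial.coeff r i\<bar> \<le> 1"
  shows "resultant p r \<noteq> 0"
proof
  assume "resultant p r = 0"
  then have "\<not> is_unit (gcd p r)"
    by (metis resultant_0_gcd deg_not_zero_imp_not_unit not_gr_zero)
  moreover obtain s where ps: "p = gcd p r * s" by (meson dvdE gcd_dvd1)
  ultimately have "is_unit s" using irreducibleD[OF \<open>irreducible p\<close>] by blast
  then have "p dvd gcd p r" using ps by (metis dvd_mult_unit_iff dvd_refl)
  then have "p dvd r" by (metis dvd_trans gcd_dvd2)
  with not_dvd_if_coeffs_abs_le_1 assms(2-4) show False by blast
qed

lemma poly_map_poly_of_int_of_real:
  "poly (map_poly of_int p) (of_real x :: 'a::{real_algebra_1, comm_ring_1}) = of_real (poly (map_poly of_int p) x)"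
  by (induct p) (simp_all add: map_poly_pCons)

lemma norm_poly_le_geometric:
  fixes r :: "int poly" and z :: complex
  assumes r_coeffs: "\<And>i. \<bar>Polynomial.coeff r i\<bar> \<le> 1" and "degree r \<le> m" and z: "cmod z > 1"
  shows "cmod (poly (map_poly of_int r) z) \<le> cmod z / (cmod z - 1) * cmod z ^ m"
proof -
  let ?t = "cmod z"
  have "cmod (poly (map_poly of_int r) z) = cmod (\<Sum>i\<le>degree r. of_int (Polynomial.coeff r i) * z ^ i)"
    by (simp add: poly_altdef[of "map_poly of_int r"] degree_map_poly coeff_map_poly)
  also have "\<dots> \<le> (\<Sum>i\<le>degree r. cmod (of_int (Polynomial.coeff r i) * z ^ i))"
    by (rule norm_sum)
  also have "\<dots> \<le> (\<Sum>i\<le>degree r. ?t ^ i)"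
  proof (rule sum_mono)
    fix i
    have "\<bar>real_of_int (Polynomial.coeff r i)\<bar> \<le> 1"
      using r_coeffs[of i] by (simp flip: of_int_abs)
    then show "cmod (of_int (Polynomial.coeff r i) * z ^ i) \<le> ?t ^ i"
      by (simp add: norm_mult norm_power mult_left_le_one_le)
  qed
  also have "\<dots> \<le> (\<Sum>i<Suc m. ?t ^ i)"
    by (rule sum_mono2) (use \<open>degree r \<le> m\<close> in auto)
  also have "\<dots> = (?t ^ Suc m - 1) / (?t - 1)"
    using z by (intro geometric_sum) simp
  also have "\<dots> \<le> ?t / (?t - 1) * ?t ^ m"
    using z by (simp add: divide_right_mono)
  finally show ?thesis .
qed

text \<open>The norm of \<open>r(\<beta>)\<close> in \<open>\<rat>(\<beta>)\<close>: a nonzero integer, being the resultant of \<open>r\<close> with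
  the minimal polynomial \<open>p\<close> of \<open>\<beta>\<close>.\<close>
lemma one_le_prod_croots_poly:
  fixes p r :: "int poly"
  assumes "lead_coeff p = 1" and "irreducible p" and "\<bar>Polynomial.coeff p 0\<bar> = 2"
    and "r \<noteq> 0" and "\<And>i. \<bar>Polynomial.coeff r i\<bar> \<le> 1"
  shows "1 \<le> (\<Prod>b\<leftarrow>croots (map_poly of_int p). cmod (poly (map_poly of_int r) b))"
proof -
  let ?p = "map_poly of_int p :: complex poly" and ?r = "map_poly of_int r :: complex poly"
  have "1 \<le> \<bar>real_of_int (resultant p r)\<bar>"
    using resultant_nonzero_if_coeffs_abs_le_1[OF assms(2-5)] by linarith
  also have "\<dots> = cmod (resultant ?p ?r)"
    by (simp add: of_int_hom.resultant_hom)
  also have "\<dots> = root_resultant ?p ?r"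
    using assms(1,4) by (subst norm_resultant_eq_root_resultant) (auto simp: root_resultant_commute)
  finally show ?thesis using assms(1) by (simp add: root_resultant_def)
qed

lemma one_le_norm_poly_at_conjugate:
  fixes p r :: "int poly" and z :: complex
  assumes "lead_coeff p = 1" and "irreducible p" and "\<bar>Polynomial.coeff p 0\<bar> = 2"
    and "r \<noteq> 0" and r_coeffs: "\<And>i. \<bar>Polynomial.coeff r i\<bar> \<le> 1" and "degree r \<le> m"
    and z: "z \<in> set (croots (map_poly of_int p))"
    and others_large: "\<And>b. b \<in> set (remove1 z (croots (map_poly of_int p))) \<Longrightarrow> 1 < cmod b"
  shows "1 \<le> cmod (poly (map_poly of_int r) z) *
    (\<Prod>b\<leftarrow>remove1 z (croots (map_poly of_int p)). cmod b / (cmod b - 1) * cmod b ^ m)"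
proof -
  let ?r = "map_poly of_int r :: complex poly"
  have "1 \<le> (\<Prod>b\<leftarrow>croots (map_poly of_int p). cmod (poly ?r b))"
    by (rule one_le_prod_croots_poly) fact+
  also have "\<dots> = cmod (poly ?r z) * (\<Prod>b\<leftarrow>remove1 z (croots (map_poly of_int p)). cmod (poly ?r b))"
    by (rule prod_list_map_remove1[OF z])
  also have "\<dots> \<le> cmod (poly ?r z) *
      (\<Prod>b\<leftarrow>remove1 z (croots (map_poly of_int p)). cmod b / (cmod b - 1) * cmod b ^ m)"
    using norm_poly_le_geometric[OF r_coeffs \<open>degree r \<le> m\<close> others_large]
    by (intro mult_left_mono prod_list_mono) auto
  finally show ?thesis .
qed

lemma garsia_number_conjugates:
  assumes "garsia_number \<beta>"
  obtains p :: "int poly"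
  where "lead_coeff p = 1" and "irreducible p" and "\<bar>Polynomial.coeff p 0\<bar> = 2"
    and "complex_of_real \<beta> \<in> set (croots (map_poly of_int p))"
    and "\<And>b. b \<in> set (remove1 (complex_of_real \<beta>) (croots (map_poly of_int p))) \<Longrightarrow> 1 < cmod b"
    and "(\<Prod>b\<leftarrow>remove1 (complex_of_real \<beta>) (croots (map_poly of_int p)). cmod b) = 2 / \<beta>"
proof -
  from assms obtain p :: "int poly" where monic: "lead_coeff p = 1" and "irreducible p"
    and root: "poly (map_poly of_int p) \<beta> = 0" and p0: "\<bar>Polynomial.coeff p 0\<bar> = 2"
    and conj: "\<And>z::complex. poly (map_poly of_int p) z = 0 \<Longrightarrow> cmod z > 1" and "\<beta> > 0"
    unfolding garsia_number_def by blast
  define pC :: "complex poly" where "pC = map_poly of_int p"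
  have "poly pC (complex_of_real \<beta>) = 0"
    using root by (simp add: pC_def poly_map_poly_of_int_of_real)
  moreover have pC_monic: "lead_coeff pC = 1"
    by (simp add: pC_def monic)
  ultimately have "(\<Prod>b\<leftarrow>croots pC. complex_of_real \<beta> - b) = 0"
    by (simp only: poly_eq_lead_coeff_prod_croots[of pC] mult_1)
  then have \<beta>_root: "complex_of_real \<beta> \<in> set (croots pC)"
    by (simp add: prod_list_zero_iff image_iff)
  have others_large: "1 < cmod b" if "b \<in> set (remove1 (complex_of_real \<beta>) (croots pC))" for b
  proof -
    have "b \<in> set (croots pC)"
      using that set_remove1_subset by fast
    then show ?thesis
      using conj poly_eq_0_if_mem_croots unfolding pC_def by blast
  qed
  have "(\<Prod>b\<leftarrow>croots pC. cmod b) = 2"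
    using norm_prod_croots[OF pC_monic] p0 by (simp add: pC_def coeff_map_poly)
  then have "\<beta> * (\<Prod>b\<leftarrow>remove1 (complex_of_real \<beta>) (croots pC). cmod b) = 2"
    using prod_list_map_remove1[OF \<beta>_root, of cmod] \<open>\<beta> > 0\<close> by simp
  then have "(\<Prod>b\<leftarrow>remove1 (complex_of_real \<beta>) (croots pC). cmod b) = 2 / \<beta>"
    using \<open>\<beta> > 0\<close> by (simp add: field_simps)
  with monic \<open>irreducible p\<close> p0 \<beta>_root others_large show thesis
    unfolding pC_def by (rule that)
qed

lemma garsia_poly_lower_bound:
  assumes "garsia_number \<beta>"
  obtains c where "c > 0" and "\<And>r m. r \<noteq> 0 \<Longrightarrow> (\<And>i. \<bar>Polynomial.coeff r i\<bar> \<le> 1) \<Longrightarrow> degree r \<le> m \<Longrightarrow>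
    c * (\<beta> / 2) ^ m \<le> \<bar>poly (map_poly of_int r) \<beta>\<bar>"
proof -
  obtain p :: "int poly" where p: "lead_coeff p = 1" "irreducible p" "\<bar>Polynomial.coeff p 0\<bar> = 2"
    and \<beta>_root: "complex_of_real \<beta> \<in> set (croots (map_poly of_int p))"
    and others_large: "\<And>b. b \<in> set (remove1 (complex_of_real \<beta>) (croots (map_poly of_int p))) \<Longrightarrow> 1 < cmod b"
    and prod_others: "(\<Prod>b\<leftarrow>remove1 (complex_of_real \<beta>) (croots (map_poly of_int p)). cmod b) = 2 / \<beta>"
    using garsia_number_conjugates[OF assms] by blast
  have "\<beta> > 0"
    using assms by (simp add: garsia_number_def)
  define K where "K = (\<Prod>b\<leftarrow>remove1 (complex_of_real \<beta>) (croots (map_poly of_int p)). cmod b / (cmod b - 1))"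
  have "K > 0"
    unfolding K_def by (intro prod_list_pos divide_pos_pos) (auto dest: others_large)
  show thesis
  proof (rule that[of "1 / K"])
    show "0 < 1 / K" using \<open>K > 0\<close> by simp
    fix r :: "int poly" and m
    assume "r \<noteq> 0" and "\<And>i. \<bar>Polynomial.coeff r i\<bar> \<le> 1" and "degree r \<le> m"
    then have "1 \<le> cmod (poly (map_poly of_int r) (complex_of_real \<beta>)) *
        (\<Prod>b\<leftarrow>remove1 (complex_of_real \<beta>) (croots (map_poly of_int p)). cmod b / (cmod b - 1) * cmod b ^ m)"
      using p \<beta>_root others_large by (intro one_le_norm_poly_at_conjugate) auto
    also have "\<dots> = \<bar>poly (map_poly of_int r) \<beta>\<bar> * (K * (2 / \<beta>) ^ m)"
      unfolding K_def prod_list_mult_distrib prod_others[symmetric] prod_list_power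
      by (simp add: o_def poly_map_poly_of_int_of_real)
    finally show "1 / K * (\<beta> / 2) ^ m \<le> \<bar>poly (map_poly of_int r) \<beta>\<bar>"
      using \<open>K > 0\<close> \<open>\<beta> > 0\<close> by (simp add: field_simps power_divide)
  qed
qed

section \<open>Separation of the points \<open>x\<^sub>w\<close>\<close>

text \<open>\<open>word_point l w\<close> is the first coordinate of \<open>S\<^sub>w\<^sub>1 (\<dots> (S\<^sub>w\<^sub>n (0, 0)))\<close>, where \<open>True\<close>
  selects the map \<open>S\<^sub>1\<close>.\<close>
fun word_point :: "real \<Rightarrow> bool list \<Rightarrow> real" where
  "word_point l [] = 0"
| "word_point l (b # w) = l * word_point l w + (if b then 1 - l else 0)"

fun word_diff_poly :: "bool list \<Rightarrow> bool list \<Rightarrow> int poly" where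
  "word_diff_poly (b # v) (c # w) = Polynomial.monom (of_bool b - of_bool c) (Suc (length v)) + word_diff_poly v w"
| "word_diff_poly _ _ = 0"

lemma degree_word_diff_poly: "length v = length w \<Longrightarrow> degree (word_diff_poly v w) \<le> length v"
proof (induct v w rule: list_induct2)
  case (Cons b v c w)
  have "degree (word_diff_poly (b # v) (c # w))
      \<le> max (degree (Polynomial.monom (of_bool b - of_bool c :: int) (Suc (length v)))) (degree (word_diff_poly v w))"
    by (simp add: degree_add_le_max)
  also have "\<dots> \<le> Suc (length v)"
    using Cons by (auto intro: order.trans[OF degree_monom_le])
  finally show ?case by simp
qed simp

lemma coeff_word_diff_poly_abs_le_1:
  "length v = length w \<Longrightarrow> \<bar>Polynomial.coeff (word_diff_poly v w) i\<bar> \<le> 1"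
proof (induct v w arbitrary: i rule: list_induct2)
  case (Cons b v c w)
  have "Polynomial.coeff (word_diff_poly v w) (Suc (length v)) = 0"
    using degree_word_diff_poly[OF Cons(1)] by (simp add: coeff_eq_0)
  then show ?case
    using Cons(2)[of i] by (cases "i = Suc (length v)") (auto simp: coeff_monom)
qed simp

lemma word_diff_poly_nonzero: "length v = length w \<Longrightarrow> v \<noteq> w \<Longrightarrow> word_diff_poly v w \<noteq> 0"
proof (induct v w rule: list_induct2)
  case (Cons b v c w)
  have "Polynomial.coeff (word_diff_poly v w) (Suc (length v)) = 0"
    using degree_word_diff_poly[OF Cons(1)] by (simp add: coeff_eq_0)
  then have top: "Polynomial.coeff (word_diff_poly (b # v) (c # w)) (Suc (length v)) = of_bool b - of_bool c"
    by (simp add: coeff_monom)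
  show ?case
  proof (cases "b = c")
    case True
    then show ?thesis using Cons by simp
  next
    case False
    then show ?thesis using top by (cases b; cases c) (auto simp del: word_diff_poly.simps)
  qed
qed simp

lemma word_point_diff_eq_poly:
  assumes "length v = length w" and "l \<noteq> 0"
  shows "word_point l v - word_point l w
    = (1 - l) * l ^ length v * poly (map_poly of_int (word_diff_poly v w)) (1 / l)"
  using assms(1)
proof (induct v w rule: list_induct2)
  case (Cons b v c w)
  let ?d = "real_of_int (of_bool b - of_bool c)"
  have "word_point l (b # v) - word_point l (c # w) = l * (word_point l v - word_point l w) + (1 - l) * ?d"
    by (cases b; cases c) (simp_all add: algebra_simps)
  also have "\<dots> = (1 - l) * l ^ Suc (length v) *
      (poly (map_poly of_int (word_diff_poly v w)) (1 / l) + ?d * (1 / l) ^ Suc (length v))"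
    using assms(2) by (simp add: Cons(2) field_simps power_divide)
  also have "poly (map_poly of_int (word_diff_poly v w)) (1 / l) + ?d * (1 / l) ^ Suc (length v)
      = poly (map_poly of_int (word_diff_poly (b # v) (c # w))) (1 / l)"
    by (simp add: poly_monom map_poly_monom of_int_hom.map_poly_hom_add)
  finally show ?case by simp
qed simp

lemma word_point_separation:
  assumes "0 < l" and "l < 1" and "garsia_number (1 / l)"
  obtains c where "c > 0" and "\<And>v w. length v = length w \<Longrightarrow> v \<noteq> w \<Longrightarrow>
    c * (1 / 2) ^ length v \<le> \<bar>word_point l v - word_point l w\<bar>"
proof -
  obtain c where "c > 0" and c: "\<And>r m. r \<noteq> 0 \<Longrightarrow> (\<And>i. \<bar>Polynomial.coeff r i\<bar> \<le> 1) \<Longrightarrow> degree r \<le> m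
      \<Longrightarrow> c * (1 / l / 2) ^ m \<le> \<bar>poly (map_poly of_int r) (1 / l)\<bar>"
    using garsia_poly_lower_bound[OF assms(3)] by blast
  show thesis
  proof (rule that[of "(1 - l) * c"])
    show "0 < (1 - l) * c" using \<open>c > 0\<close> \<open>l < 1\<close> by simp
    fix v w :: "bool list"
    assume len: "length v = length w" and "v \<noteq> w"
    have sep: "c * (1 / l / 2) ^ length v \<le> \<bar>poly (map_poly of_int (word_diff_poly v w)) (1 / l)\<bar>"
      using word_diff_poly_nonzero[OF len \<open>v \<noteq> w\<close>] coeff_word_diff_poly_abs_le_1[OF len]
        degree_word_diff_poly[OF len]
      by (intro c) auto
    have "(1 - l) * c * (1 / 2) ^ length v = (1 - l) * c * (l * (1 / l / 2)) ^ length v"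
      using assms(1) by simp
    also have "\<dots> = (1 - l) * l ^ length v * (c * (1 / l / 2) ^ length v)"
      by (simp only: power_mult_distrib mult_ac)
    also have "\<dots> \<le> \<bar>word_point l v - word_point l w\<bar>"
      using assms(1,2) sep by (simp add: word_point_diff_eq_poly[OF len] abs_mult)
    finally show "(1 - l) * c * (1 / 2) ^ length v \<le> \<bar>word_point l v - word_point l w\<bar>" .
  qed
qed

lemma word_point_bounds: "0 \<le> l \<Longrightarrow> l \<le> 1 \<Longrightarrow> word_point l w \<in> {0..1}"
proof (induct w)
  case (Cons b w)
  then have "l * word_point l w \<le> l" by (auto intro: mult_left_le)
  then show ?case using Cons by auto
qed simp

lemma card_bool_lists_length: "card {w :: bool list. length w = k} = 2 ^ k"
  using card_lists_length_eq[of "UNIV :: bool set" k] by simp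

lemma finite_bool_lists_length: "finite {w :: bool list. length w = k}"
  using finite_lists_length_eq[of "UNIV :: bool set" k] by simp

definition word_segment :: "real \<Rightarrow> bool list \<Rightarrow> (real \<times> real) set" where
  "word_segment l w = {word_point l w} \<times> {0..l ^ length w}"

definition branch :: "real \<Rightarrow> bool \<Rightarrow> real \<times> real \<Rightarrow> real \<times> real" where
  "branch l b = (\<lambda>(x, y). (l * x + (if b then 1 - l else 0), l * y))"

lemma branch_word_segment:
  assumes "0 < l"
  shows "branch l b ` word_segment l w = word_segment l (b # w)"
proof
  show "branch l b ` word_segment l w \<subseteq> word_segment l (b # w)"
    using assms by (auto simp: branch_def word_segment_def)
  show "word_segment l (b # w) \<subseteq> branch l b ` word_segment l w"
  proof
    fix p assume "p \<in> word_segment l (b # w)"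
    then obtain y where p: "p = (word_point l (b # w), y)" and "0 \<le> y" "y \<le> l * l ^ length w"
      by (auto simp: word_segment_def)
    then have "(word_point l w, y / l) \<in> word_segment l w"
      using assms by (auto simp: word_segment_def field_simps)
    moreover have "p = branch l b (word_point l w, y / l)"
      using assms p by (simp add: branch_def)
    ultimately show "p \<in> branch l b ` word_segment l w" by blast
  qed
qed

lemma branch_strip:
  "0 < l \<Longrightarrow> l \<le> 1 \<Longrightarrow> branch l b ` ({0..1} \<times> {0..l ^ n}) \<subseteq> {0..1} \<times> {0..l ^ Suc n}"
  by (auto simp: branch_def mult_left_le intro: mult_le_one)

section \<open>Counting mesh boxes\<close>

definition mesh_boxes :: "real \<Rightarrow> (real \<times> real) set \<Rightarrow> (int \<times> int) set" where
  "mesh_boxes \<delta> E = (\<lambda>p. (\<lfloor>fst p / \<delta>\<rfloor>, \<lfloor>snd p / \<delta>\<rfloor>)) ` E"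

lemma mesh_count_eq_card: "mesh_count \<delta> E = card (mesh_boxes \<delta> E)"
  by (simp add: mesh_count_def mesh_boxes_def)

lemma mesh_boxes_mono: "E \<subseteq> E' \<Longrightarrow> mesh_boxes \<delta> E \<subseteq> mesh_boxes \<delta> E'"
  by (auto simp: mesh_boxes_def)

lemma mesh_boxes_vertical_segment:
  assumes "0 < \<delta>"
  shows "mesh_boxes \<delta> ({x} \<times> {0..h}) = {\<lfloor>x / \<delta>\<rfloor>} \<times> {0..\<lfloor>h / \<delta>\<rfloor>}"
proof
  show "mesh_boxes \<delta> ({x} \<times> {0..h}) \<subseteq> {\<lfloor>x / \<delta>\<rfloor>} \<times> {0..\<lfloor>h / \<delta>\<rfloor>}"
    using assms by (auto simp: mesh_boxes_def intro!: floor_mono divide_right_mono)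
  show "{\<lfloor>x / \<delta>\<rfloor>} \<times> {0..\<lfloor>h / \<delta>\<rfloor>} \<subseteq> mesh_boxes \<delta> ({x} \<times> {0..h})"
  proof clarify
    fix j :: int
    assume "j \<in> {0..\<lfloor>h / \<delta>\<rfloor>}"
    then have "0 \<le> j * \<delta>" "j * \<delta> \<le> h"
      using assms by (auto simp: le_floor_iff pos_le_divide_eq)
    then show "(\<lfloor>x / \<delta>\<rfloor>, j) \<in> mesh_boxes \<delta> ({x} \<times> {0..h})"
      using assms unfolding mesh_boxes_def by (auto intro!: image_eqI[of _ _ "(x, j * \<delta>)"])
  qed
qed

lemma mesh_boxes_rectangle_subset:
  "0 < \<delta> \<Longrightarrow> mesh_boxes \<delta> ({0..a} \<times> {0..b}) \<subseteq> {0..\<lfloor>a / \<delta>\<rfloor>} \<times> {0..\<lfloor>b / \<delta>\<rfloor>}"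
  by (auto simp: mesh_boxes_def intro!: floor_mono divide_right_mono)

lemma card_floor_range_le: "0 \<le> t \<Longrightarrow> real (card {0..\<lfloor>t\<rfloor>}) \<le> t + 1"
  by simp

lemma card_floor_range_ge: "t \<le> real (card {0..\<lfloor>t\<rfloor>})"
  by simp linarith

lemma floor_divide_eq_imp_dist_less:
  fixes \<delta> :: real
  assumes "0 < \<delta>" and "\<lfloor>a / \<delta>\<rfloor> = \<lfloor>b / \<delta>\<rfloor>"
  shows "\<bar>a - b\<bar> < \<delta>"
proof -
  have "\<bar>a / \<delta> - b / \<delta>\<bar> < 1"
    using assms(2) floor_correct[of "a / \<delta>"] floor_correct[of "b / \<delta>"] by linarith
  then show ?thesis
    using assms(1) by (simp add: diff_divide_distrib[symmetric] abs_divide)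
qed

lemma min_le_powr:
  fixes u v a :: real
  assumes "0 < u" and "0 < v" and "0 \<le> a" and "a \<le> 1"
  shows "min u v \<le> u powr a * v powr (1 - a)"
proof (cases "u \<le> v")
  case True
  have "u = u powr a * u powr (1 - a)"
    using assms(1) by (simp flip: powr_add)
  also have "\<dots> \<le> u powr a * v powr (1 - a)"
    using True assms by (intro mult_left_mono powr_mono2) auto
  finally show ?thesis using True by simp
next
  case False
  have "v = v powr a * v powr (1 - a)"
    using assms(2) by (simp flip: powr_add)
  also have "\<dots> \<le> u powr a * v powr (1 - a)"
    using False assms by (intro mult_right_mono powr_mono2) auto
  finally show ?thesis using False by simp
qed

lemma exists_least_power_le:
  fixes l \<delta> :: real
  assumes "0 < l" "l < 1" "0 < \<delta>" "\<delta> < 1"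
  obtains n where "l ^ n \<le> \<delta>" and "\<And>j. j < n \<Longrightarrow> \<delta> < l ^ j" and "real n \<le> 1 + ln \<delta> / ln l"
proof -
  have ex: "\<exists>n. l ^ n \<le> \<delta>"
    using real_arch_pow_inv[OF assms(3,2)] less_imp_le by blast
  define n where "n = (LEAST n. l ^ n \<le> \<delta>)"
  have n: "l ^ n \<le> \<delta>"
    unfolding n_def by (rule LeastI_ex[OF ex])
  have below_n: "\<delta> < l ^ j" if "j < n" for j
    using not_less_Least[of j "\<lambda>n. l ^ n \<le> \<delta>"] that unfolding n_def by auto
  have "n \<noteq> 0"
    using n assms(4) by (cases n) auto
  then have "ln \<delta> < ln (l ^ (n - 1))"
    using below_n[of "n - 1"] assms by simp
  then have "real (n - 1) * ln l > ln \<delta>"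
    by (simp add: ln_realpow)
  then have "real (n - 1) \<le> ln \<delta> / ln l"
    using assms(1,2) by (simp add: le_divide_eq)
  with \<open>n \<noteq> 0\<close> have "real n \<le> 1 + ln \<delta> / ln l"
    by (simp add: of_nat_diff)
  with n below_n show thesis by (rule that)
qed

lemma box_dims_eq_if_tendsto:
  assumes "((\<lambda>\<delta>. ln (real (mesh_count \<delta> E)) / (- ln \<delta>)) \<longlongrightarrow> D) (at_right 0)"
  shows "upper_box_dim E = ereal D \<and> lower_box_dim E = ereal D"
  using tendsto_iff_Liminf_eq_Limsup[OF trivial_limit_at_right_real] tendsto_ereal[OF assms]
  unfolding upper_box_dim_def lower_box_dim_def by blast

lemma tendsto_ln_ratio_sandwich:
  fixes f :: "real \<Rightarrow> real"
  assumes "\<forall>\<^sub>F \<delta> in at_right 0. D * (- ln \<delta>) - A \<le> f \<delta>"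
    and "\<forall>\<^sub>F \<delta> in at_right 0. f \<delta> \<le> D * (- ln \<delta>) + B + ln (- ln \<delta>)"
  shows "((\<lambda>\<delta>. f \<delta> / (- ln \<delta>)) \<longlongrightarrow> D) (at_right 0)"
proof (rule tendsto_sandwich)
  have "\<forall>\<^sub>F \<delta> in at_right 0. 0 < - ln (\<delta> :: real)"
    by (rule eventually_at_rightI[of 0 1]) auto
  note ln_neg = this
  show "\<forall>\<^sub>F \<delta> in at_right 0. (D * (- ln \<delta>) - A) / (- ln \<delta>) \<le> f \<delta> / (- ln \<delta>)"
    using ln_neg assms(1) by eventually_elim (rule divide_right_mono, auto)
  show "\<forall>\<^sub>F \<delta> in at_right 0. f \<delta> / (- ln \<delta>) \<le> (D * (- ln \<delta>) + B + ln (- ln \<delta>)) / (- ln \<delta>)"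
    using ln_neg assms(2) by eventually_elim (rule divide_right_mono, auto)
  show "((\<lambda>\<delta>. (D * (- ln \<delta>) - A) / (- ln \<delta>)) \<longlongrightarrow> D) (at_right 0)"
    and "((\<lambda>\<delta>. (D * (- ln \<delta>) + B + ln (- ln \<delta>)) / (- ln \<delta>)) \<longlongrightarrow> D) (at_right 0)"
    by real_asymp+
qed

lemma mesh_boxes_Un: "mesh_boxes \<delta> (A \<union> B) = mesh_boxes \<delta> A \<union> mesh_boxes \<delta> B"
  by (simp add: mesh_boxes_def image_Un)

lemma mesh_boxes_UN: "mesh_boxes \<delta> (\<Union>i\<in>I. A i) = (\<Union>i\<in>I. mesh_boxes \<delta> (A i))"
  by (simp add: mesh_boxes_def image_UN)

definition word_columns :: "real \<Rightarrow> real \<Rightarrow> nat \<Rightarrow> int set" where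
  "word_columns l \<delta> k = (\<lambda>w. \<lfloor>word_point l w / \<delta>\<rfloor>) ` {w. length w = k}"

lemma finite_word_columns: "finite (word_columns l \<delta> k)"
  by (simp add: word_columns_def finite_bool_lists_length)

lemma card_word_columns_le:
  assumes "0 < \<delta>" and "\<delta> \<le> 1" and "0 \<le> l" and "l \<le> 1"
  shows "real (card (word_columns l \<delta> k)) \<le> min (2 ^ k) (2 / \<delta>)"
proof -
  have "card (word_columns l \<delta> k) \<le> 2 ^ k"
    unfolding word_columns_def
    using card_image_le[OF finite_bool_lists_length] by (metis card_bool_lists_length)
  moreover have "word_columns l \<delta> k \<subseteq> {0..\<lfloor>1 / \<delta>\<rfloor>}"
    unfolding word_columns_def
    using word_point_bounds[OF assms(3,4)] assms(1) by (auto intro!: floor_mono divide_right_mono)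
  then have "card (word_columns l \<delta> k) \<le> card {0..\<lfloor>1 / \<delta>\<rfloor>}"
    by (rule card_mono[rotated]) simp
  moreover have "1 / \<delta> + 1 \<le> 2 / \<delta>"
    using assms(1,2) by (simp add: le_divide_eq algebra_simps)
  ultimately show ?thesis
    using card_floor_range_le[of "1 / \<delta>"] assms(1) by (simp del: card_atLeastAtMost_int)
qed

lemma card_word_columns_eq:
  assumes "0 < \<delta>"
    and separated: "\<And>v w. length v = k \<Longrightarrow> length w = k \<Longrightarrow> v \<noteq> w \<Longrightarrow> \<delta> \<le> \<bar>word_point l v - word_point l w\<bar>"
  shows "card (word_columns l \<delta> k) = 2 ^ k"
proof -
  have "inj_on (\<lambda>w. \<lfloor>word_point l w / \<delta>\<rfloor>) {w. length w = k}"
  proof (rule inj_onI, rule ccontr)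
    fix v w :: "bool list"
    assume "v \<in> {w. length w = k}" "w \<in> {w. length w = k}" "v \<noteq> w"
      and "\<lfloor>word_point l v / \<delta>\<rfloor> = \<lfloor>word_point l w / \<delta>\<rfloor>"
    then have "\<delta> \<le> \<bar>word_point l v - word_point l w\<bar>" "\<bar>word_point l v - word_point l w\<bar> < \<delta>"
      using separated floor_divide_eq_imp_dist_less[OF assms(1)] by auto
    then show False by simp
  qed
  then show ?thesis
    by (simp add: word_columns_def card_image card_bool_lists_length)
qed

section \<open>Box counts of the attractor\<close>

locale condensation_attractor =
  fixes l :: real and F :: "(real \<times> real) set"
  assumes l_gt_half: "1/2 < l" and l_lt_1: "l < 1"
    and subset_square: "F \<subseteq> {0..1} \<times> {0..1}"
    and fixed_point: "F = (\<lambda>(x, y). (l * x, l * y)) ` F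
      \<union> (\<lambda>(x, y). (l * x + (1 - l), l * y)) ` F \<union> ({0} \<times> {0..1})"
begin

definition dim :: real where "dim = ln (4 * l) / ln 2"

lemma l_pos: "0 < l"
  using l_gt_half by simp

lemma dim_eq: "dim = 1 + ln (2 * l) / ln 2"
  using ln_mult[of 2 "2 * l"] l_pos by (simp add: dim_def add_divide_distrib)

lemma one_lt_dim: "1 < dim"
  using l_gt_half by (simp add: dim_eq)

lemma dim_lt_2: "dim < 2"
  using l_lt_1 l_pos by (simp add: dim_eq)

lemma two_powr_dim: "2 powr dim = 4 * l"
  using l_pos by (simp add: dim_def powr_def)

lemma fixed_point_branch: "F = branch l False ` F \<union> branch l True ` F \<union> word_segment l []"
proof -
  have "branch l False = (\<lambda>(x, y). (l * x, l * y))"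
    and "branch l True = (\<lambda>(x, y). (l * x + (1 - l), l * y))"
    and "word_segment l [] = {0} \<times> {0..1}"
    by (auto simp: branch_def word_segment_def)
  then show ?thesis by (simp only:) (rule fixed_point)
qed

lemma branch_image_subset: "branch l b ` F \<subseteq> F"
proof -
  have "branch l False ` F \<union> branch l True ` F
      \<subseteq> branch l False ` F \<union> branch l True ` F \<union> word_segment l []"
    by blast
  then have "branch l False ` F \<union> branch l True ` F \<subseteq> F"
    by (simp only: fixed_point_branch[symmetric])
  then show ?thesis by (cases b) auto
qed

lemma word_segment_subset: "word_segment l w \<subseteq> F"
proof (induct w)
  case Nil
  show ?case by (subst fixed_point_branch) (rule Un_upper2)
next
  case (Cons b w)
  have "word_segment l (b # w) = branch l b ` word_segment l w"
    by (simp add: branch_word_segment l_pos)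
  also have "\<dots> \<subseteq> branch l b ` F"
    using Cons by (rule image_mono)
  finally show ?case using branch_image_subset by blast
qed

lemma subset_word_segments_strip:
  "F \<subseteq> (\<Union>w\<in>{w. length w < n}. word_segment l w) \<union> {0..1} \<times> {0..l ^ n}"
proof (induct n)
  case 0
  show ?case using subset_square by simp
next
  case (Suc n)
  let ?U = "\<lambda>n. (\<Union>w\<in>{w. length w < n}. word_segment l w) \<union> {0..1} \<times> {0..l ^ n}"
  have "branch l b ` F \<subseteq> ?U (Suc n)" for b
  proof -
    have "branch l b ` F \<subseteq> branch l b ` ?U n"
      using Suc by (rule image_mono)
    also have "\<dots> = (\<Union>w\<in>{w. length w < n}. word_segment l (b # w)) \<union> branch l b ` ({0..1} \<times> {0..l ^ n})"
      by (simp add: image_Un image_UN branch_word_segment l_pos)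
    also have "\<dots> \<subseteq> ?U (Suc n)"
    proof (intro Un_mono UN_least)
      fix w :: "bool list"
      assume "w \<in> {w. length w < n}"
      then have "b # w \<in> {w. length w < Suc n}" by simp
      then show "word_segment l (b # w) \<subseteq> (\<Union>w\<in>{w. length w < Suc n}. word_segment l w)"
        by blast
    next
      show "branch l b ` ({0..1} \<times> {0..l ^ n}) \<subseteq> {0..1} \<times> {0..l ^ Suc n}"
        using branch_strip[OF l_pos] l_lt_1 by simp
    qed
    finally show ?thesis .
  qed
  moreover have "word_segment l [] \<subseteq> ?U (Suc n)"
    by auto
  ultimately show ?case
    by (subst fixed_point_branch) (intro Un_least)
qed

lemma finite_mesh_boxes:
  assumes "0 < \<delta>"
  shows "finite (mesh_boxes \<delta> F)"
proof (rule finite_subset)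
  show "mesh_boxes \<delta> F \<subseteq> {0..\<lfloor>1 / \<delta>\<rfloor>} \<times> {0..\<lfloor>1 / \<delta>\<rfloor>}"
    using mesh_boxes_mono[OF subset_square] mesh_boxes_rectangle_subset[OF assms, of 1 1] by blast
qed simp

lemma mesh_count_pos:
  assumes "0 < \<delta>"
  shows "0 < mesh_count \<delta> F"
proof -
  have "(0, 0) \<in> F"
    using word_segment_subset[of "[]"] by (auto simp: word_segment_def)
  then have "mesh_boxes \<delta> F \<noteq> {}"
    by (auto simp: mesh_boxes_def)
  then show ?thesis
    using finite_mesh_boxes[OF assms] by (simp add: mesh_count_eq_card card_gt_0_iff)
qed

lemma word_columns_boxes_subset:
  assumes "0 < \<delta>"
  shows "word_columns l \<delta> k \<times> {0..\<lfloor>l ^ k / \<delta>\<rfloor>} \<subseteq> mesh_boxes \<delta> F"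
proof -
  have "word_columns l \<delta> k \<times> {0..\<lfloor>l ^ k / \<delta>\<rfloor>} = (\<Union>w\<in>{w. length w = k}. mesh_boxes \<delta> (word_segment l w))"
    using assms by (auto simp: word_columns_def word_segment_def mesh_boxes_vertical_segment)
  then show ?thesis
    using mesh_boxes_mono[OF word_segment_subset] by blast
qed

lemma mesh_boxes_subset_levels:
  assumes "0 < \<delta>"
  shows "mesh_boxes \<delta> F
    \<subseteq> (\<Union>j<n. word_columns l \<delta> j \<times> {0..\<lfloor>l ^ j / \<delta>\<rfloor>}) \<union> {0..\<lfloor>1 / \<delta>\<rfloor>} \<times> {0..\<lfloor>l ^ n / \<delta>\<rfloor>}"
proof -
  have "mesh_boxes \<delta> F
      \<subseteq> (\<Union>w\<in>{w. length w < n}. mesh_boxes \<delta> (word_segment l w)) \<union> mesh_boxes \<delta> ({0..1} \<times> {0..l ^ n})"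
    using mesh_boxes_mono[OF subset_word_segments_strip] by (simp add: mesh_boxes_Un mesh_boxes_UN)
  also have "\<dots> \<subseteq> (\<Union>j<n. word_columns l \<delta> j \<times> {0..\<lfloor>l ^ j / \<delta>\<rfloor>}) \<union> {0..\<lfloor>1 / \<delta>\<rfloor>} \<times> {0..\<lfloor>l ^ n / \<delta>\<rfloor>}"
  proof (intro Un_mono UN_least)
    fix w :: "bool list"
    assume "w \<in> {w. length w < n}"
    moreover have "mesh_boxes \<delta> (word_segment l w) \<subseteq> word_columns l \<delta> (length w) \<times> {0..\<lfloor>l ^ length w / \<delta>\<rfloor>}"
      using assms by (auto simp: word_segment_def mesh_boxes_vertical_segment word_columns_def)
    ultimately show "mesh_boxes \<delta> (word_segment l w) \<subseteq> (\<Union>j<n. word_columns l \<delta> j \<times> {0..\<lfloor>l ^ j / \<delta>\<rfloor>})"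
      by auto
  qed (rule mesh_boxes_rectangle_subset[OF assms])
  finally show ?thesis .
qed

lemma mesh_count_lower:
  assumes "0 < \<delta>"
    and separated: "\<And>v w. length v = k \<Longrightarrow> length w = k \<Longrightarrow> v \<noteq> w \<Longrightarrow> \<delta> \<le> \<bar>word_point l v - word_point l w\<bar>"
  shows "(2 * l) ^ k / \<delta> \<le> real (mesh_count \<delta> F)"
proof -
  have "card (word_columns l \<delta> k \<times> {0..\<lfloor>l ^ k / \<delta>\<rfloor>}) \<le> mesh_count \<delta> F"
    unfolding mesh_count_eq_card
    by (rule card_mono[OF finite_mesh_boxes[OF assms(1)] word_columns_boxes_subset[OF assms(1)]])
  moreover have "card (word_columns l \<delta> k) = 2 ^ k"
    using assms by (rule card_word_columns_eq)
  ultimately have "real (2 ^ k * card {0..\<lfloor>l ^ k / \<delta>\<rfloor>}) \<le> real (mesh_count \<delta> F)"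
    by (simp only: card_cartesian_product of_nat_le_iff)
  then have "2 ^ k * real (card {0..\<lfloor>l ^ k / \<delta>\<rfloor>}) \<le> real (mesh_count \<delta> F)"
    by (simp del: card_atLeastAtMost_int)
  moreover have "(2 * l) ^ k / \<delta> = 2 ^ k * (l ^ k / \<delta>)"
    by (simp add: power_mult_distrib)
  moreover have "\<dots> \<le> 2 ^ k * real (card {0..\<lfloor>l ^ k / \<delta>\<rfloor>})"
    by (rule mult_left_mono[OF card_floor_range_ge]) simp
  ultimately show ?thesis by linarith
qed

lemma mesh_count_upper:
  assumes "0 < \<delta>" "\<delta> \<le> 1" "l ^ n \<le> \<delta>" and above: "\<And>j. j < n \<Longrightarrow> \<delta> < l ^ j"
  shows "real (mesh_count \<delta> F) \<le> 4 / \<delta> + (\<Sum>j<n. min (2 ^ j) (2 / \<delta>) * (2 * l ^ j / \<delta>))"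
proof -
  define level where "level j = word_columns l \<delta> j \<times> {0..\<lfloor>l ^ j / \<delta>\<rfloor>}" for j
  define strip where "strip = {0..\<lfloor>1 / \<delta>\<rfloor>} \<times> {0..\<lfloor>l ^ n / \<delta>\<rfloor>}"
  have "finite ((\<Union>j<n. level j) \<union> strip)"
    by (simp add: strip_def level_def finite_word_columns)
  then have "card (mesh_boxes \<delta> F) \<le> card ((\<Union>j<n. level j) \<union> strip)"
    using mesh_boxes_subset_levels[OF assms(1)] unfolding level_def strip_def by (rule card_mono)
  also have "\<dots> \<le> card (\<Union>j<n. level j) + card strip"
    by (rule card_Un_le)
  also have "card (\<Union>j<n. level j) \<le> (\<Sum>j<n. card (level j))"
    by (rule card_UN_le) simp
  finally have "real (mesh_count \<delta> F) \<le> (\<Sum>j<n. real (card (level j))) + real (card strip)"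
    by (simp add: mesh_count_eq_card flip: of_nat_sum)
  moreover have "real (card strip) \<le> (1 / \<delta> + 1) * (l ^ n / \<delta> + 1)"
    unfolding strip_def card_cartesian_product of_nat_mult using assms(1) l_pos
    by (intro mult_mono card_floor_range_le) (auto simp del: card_atLeastAtMost_int)
  moreover have "(1 / \<delta> + 1) * (l ^ n / \<delta> + 1) \<le> (1 / \<delta> + 1) * 2"
    using assms(1,3) by (intro mult_left_mono) (simp_all add: field_simps)
  moreover have "(1 / \<delta> + 1) * 2 \<le> 4 / \<delta>"
    using assms(1,2) by (simp add: le_divide_eq algebra_simps)
  moreover have "real (card (level j)) \<le> min (2 ^ j) (2 / \<delta>) * (2 * l ^ j / \<delta>)" if "j < n" for j
  proof -
    have "real (card {0..\<lfloor>l ^ j / \<delta>\<rfloor>}) \<le> 2 * l ^ j / \<delta>"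
      using card_floor_range_le[of "l ^ j / \<delta>"] above[OF that] assms(1) l_pos
      by (simp add: field_simps del: card_atLeastAtMost_int)
    then show ?thesis
      unfolding level_def card_cartesian_product of_nat_mult
      using card_word_columns_le[OF assms(1,2), of l j] l_pos l_lt_1 assms(1)
      by (intro mult_mono) auto
  qed
  then have "(\<Sum>j<n. real (card (level j))) \<le> (\<Sum>j<n. min (2 ^ j) (2 / \<delta>) * (2 * l ^ j / \<delta>))"
    by (intro sum_mono) simp
  ultimately show ?thesis by linarith
qed

lemma level_boxes_le:
  assumes "0 < \<delta>"
  shows "min (2 ^ j) (2 / \<delta>) * (2 * l ^ j / \<delta>) \<le> (2 / \<delta>) powr dim"
proof -
  define a where "a = 2 - dim"
  have a: "0 \<le> a" "a \<le> 1"
    using one_lt_dim dim_lt_2 by (auto simp: a_def)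
  have "2 powr a = 1 / l"
    using l_pos by (simp add: a_def powr_diff two_powr_dim)
  have "((2::real) ^ j) powr a = (2 powr real j) powr a"
    by (simp add: powr_realpow)
  also have "\<dots> = (2 powr a) powr real j"
    by (simp add: powr_powr mult.commute)
  also have "\<dots> = (1 / l) ^ j"
    using l_pos by (simp add: \<open>2 powr a = 1 / l\<close> powr_realpow)
  finally have "min (2 ^ j) (2 / \<delta>) \<le> (1 / l) ^ j * (2 / \<delta>) powr (dim - 1)"
    using min_le_powr[of "2 ^ j" "2 / \<delta>" a] a assms by (simp add: a_def)
  then have "min (2 ^ j) (2 / \<delta>) * (2 * l ^ j / \<delta>) \<le> (1 / l) ^ j * (2 / \<delta>) powr (dim - 1) * (2 * l ^ j / \<delta>)"
    using assms l_pos by (intro mult_right_mono) auto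
  also have "\<dots> = ((1 / l) ^ j * l ^ j) * ((2 / \<delta>) powr (dim - 1) * (2 / \<delta>) powr 1)"
    using assms by (simp add: mult_ac)
  also have "\<dots> = (2 / \<delta>) powr (dim - 1 + 1)"
    using l_pos by (simp only: powr_add flip: power_mult_distrib) simp
  finally show ?thesis
    by simp
qed

lemma ln_mesh_count_lower:
  assumes "garsia_number (1 / l)"
  obtains A where "\<forall>\<^sub>F \<delta> in at_right 0. dim * (- ln \<delta>) - A \<le> ln (real (mesh_count \<delta> F))"
proof -
  obtain c where "c > 0" and separated: "\<And>v w. length v = length w \<Longrightarrow> v \<noteq> w \<Longrightarrow>
      c * (1 / 2) ^ length v \<le> \<bar>word_point l v - word_point l w\<bar>"
    using word_point_separation[OF l_pos l_lt_1 assms] by blast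
  define A where "A = (1 - ln c / ln 2) * ln (2 * l)"
  have "dim * (- ln \<delta>) - A \<le> ln (real (mesh_count \<delta> F))" if \<delta>: "0 < \<delta>" "\<delta> < c" for \<delta>
  proof -
    define k where "k = nat \<lfloor>log 2 (c / \<delta>)\<rfloor>"
    have "0 \<le> log 2 (c / \<delta>)"
      using \<delta> by simp
    then have k: "log 2 (c / \<delta>) - 1 \<le> real k" "real k \<le> log 2 (c / \<delta>)"
      unfolding k_def by linarith+
    then have "2 ^ k \<le> c / \<delta>"
      using \<delta> by (simp add: le_log_iff powr_realpow)
    then have "\<delta> \<le> c * (1 / 2) ^ k"
      using \<delta> by (simp add: power_one_over le_divide_eq mult.commute)
    then have "\<delta> \<le> \<bar>word_point l v - word_point l w\<bar>"
      if "length v = k" "length w = k" "v \<noteq> w" for v w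
      using separated[of v w] that by auto
    then have "(2 * l) ^ k / \<delta> \<le> real (mesh_count \<delta> F)"
      by (rule mesh_count_lower[OF \<delta>(1)])
    moreover have "0 < (2 * l) ^ k / \<delta>"
      using l_pos \<delta> by simp
    moreover have "dim * (- ln \<delta>) - A = (log 2 (c / \<delta>) - 1) * ln (2 * l) - ln \<delta>"
      using \<delta> \<open>c > 0\<close> by (simp add: A_def dim_eq log_def ln_div algebra_simps add_divide_distrib diff_divide_distrib)
    moreover have "(log 2 (c / \<delta>) - 1) * ln (2 * l) \<le> real k * ln (2 * l)"
      using k l_gt_half by (intro mult_right_mono) auto
    moreover have "ln ((2 * l) ^ k / \<delta>) = real k * ln (2 * l) - ln \<delta>"
      using l_pos \<delta> ln_realpow[of "2 * l" k] ln_div[of "(2 * l) ^ k" \<delta>] by simp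
    ultimately show ?thesis
      by (smt (verit) ln_le_cancel_iff of_nat_0_less_iff)
  qed
  then show thesis
    using \<open>c > 0\<close> by (intro that[of A] eventually_at_rightI[of 0 c]) auto
qed

lemma mesh_count_le_powr:
  assumes "0 < \<delta>" and "\<delta> < exp (- 1)"
  shows "real (mesh_count \<delta> F) \<le> (3 + 1 / (- ln l)) * (- ln \<delta>) * (2 / \<delta>) powr dim"
proof -
  have "ln \<delta> < - 1"
    using ln_less_cancel_iff[of \<delta> "exp (- 1)"] assms by simp
  then have "\<delta> < 1"
    using ln_less_zero_iff[OF assms(1)] by linarith
  obtain n where n: "l ^ n \<le> \<delta>" "\<And>j. j < n \<Longrightarrow> \<delta> < l ^ j" "real n \<le> 1 + ln \<delta> / ln l"
    using exists_least_power_le[OF l_pos l_lt_1 assms(1) \<open>\<delta> < 1\<close>] by blast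
  have "2 / \<delta> \<le> (2 / \<delta>) powr dim"
    using powr_mono[of 1 dim "2 / \<delta>"] one_lt_dim assms(1) \<open>\<delta> < 1\<close> by simp
  have "real (mesh_count \<delta> F) \<le> 4 / \<delta> + (\<Sum>j<n. min (2 ^ j) (2 / \<delta>) * (2 * l ^ j / \<delta>))"
    using assms(1) \<open>\<delta> < 1\<close> n by (intro mesh_count_upper) auto
  also have "\<dots> \<le> 2 * (2 / \<delta>) powr dim + (\<Sum>j<n. (2 / \<delta>) powr dim)"
    using \<open>2 / \<delta> \<le> (2 / \<delta>) powr dim\<close> level_boxes_le[OF assms(1)] by (intro add_mono sum_mono) auto
  also have "\<dots> = (real n + 2) * (2 / \<delta>) powr dim"
    by (simp add: algebra_simps)
  also have "\<dots> \<le> (3 + 1 / (- ln l)) * (- ln \<delta>) * (2 / \<delta>) powr dim"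
  proof (rule mult_right_mono)
    have "real n + 2 \<le> 3 + (- ln \<delta>) / (- ln l)"
      using n(3) by simp
    also have "\<dots> \<le> (3 + 1 / (- ln l)) * (- ln \<delta>)"
      using \<open>ln \<delta> < - 1\<close> by (simp add: algebra_simps)
    finally show "real n + 2 \<le> (3 + 1 / (- ln l)) * (- ln \<delta>)" .
  qed simp
  finally show ?thesis .
qed

lemma ln_mesh_count_upper:
  obtains B where "\<forall>\<^sub>F \<delta> in at_right 0. ln (real (mesh_count \<delta> F)) \<le> dim * (- ln \<delta>) + B + ln (- ln \<delta>)"
proof -
  define K where "K = 3 + 1 / (- ln l)"
  have "0 < K"
    unfolding K_def using l_pos l_lt_1 by (intro add_pos_pos) simp_all
  have "ln (real (mesh_count \<delta> F)) \<le> dim * (- ln \<delta>) + (ln K + dim * ln 2) + ln (- ln \<delta>)"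
    if \<delta>: "0 < \<delta>" "\<delta> < exp (- 1)" for \<delta>
  proof -
    have "ln \<delta> < - 1"
      using ln_less_cancel_iff[of \<delta> "exp (- 1)"] \<delta> by simp
    then have "0 < - ln \<delta>"
      by simp
    have "ln (K * (- ln \<delta>) * (2 / \<delta>) powr dim) = ln (K * (- ln \<delta>)) + ln ((2 / \<delta>) powr dim)"
      by (rule ln_mult_pos[OF mult_pos_pos[OF \<open>0 < K\<close> \<open>0 < - ln \<delta>\<close>]]) (use \<delta>(1) in simp)
    moreover have "ln (K * (- ln \<delta>)) = ln K + ln (- ln \<delta>)"
      by (rule ln_mult_pos) fact+
    moreover have "ln ((2 / \<delta>) powr dim) = dim * (ln 2 - ln \<delta>)"
      using \<delta>(1) ln_div[of 2 \<delta>] by (simp add: ln_powr)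
    moreover have "ln (real (mesh_count \<delta> F)) \<le> ln (K * (- ln \<delta>) * (2 / \<delta>) powr dim)"
      using mesh_count_le_powr[OF \<delta>] mesh_count_pos[OF \<delta>(1)] by (simp add: K_def)
    ultimately show ?thesis
      by (simp add: algebra_simps)
  qed
  then show thesis
    by (intro that eventually_at_rightI[of 0 "exp (- 1)"]) auto
qed

end

theorem theorem2p1:
  fixes lam :: real and F :: "(real \<times> real) set"
  assumes "1/2 < lam" and "lam < 1"
    and "garsia_number (1 / lam)"
    and "F \<noteq> {}" and "compact F" and "F \<subseteq> {0..1} \<times> {0..1}"
    and "F = (\<lambda>(x, y). (lam * x, lam * y)) ` F
            \<union> (\<lambda>(x, y). (lam * x + (1 - lam), lam * y)) ` F
            \<union> ({0} \<times> {0..1})"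
  shows "upper_box_dim F = ereal (ln (4 * lam) / ln 2)
    \<and> lower_box_dim F = ereal (ln (4 * lam) / ln 2)
    \<and> ln (4 * lam) / ln 2 > 1"
proof -
  interpret condensation_attractor lam F
    using assms(1,2,6,7) by unfold_locales
  obtain A where "\<forall>\<^sub>F \<delta> in at_right 0. dim * (- ln \<delta>) - A \<le> ln (real (mesh_count \<delta> F))"
    using ln_mesh_count_lower[OF assms(3)] by blast
  moreover obtain B where "\<forall>\<^sub>F \<delta> in at_right 0. ln (real (mesh_count \<delta> F)) \<le> dim * (- ln \<delta>) + B + ln (- ln \<delta>)"
    using ln_mesh_count_upper by blast
  ultimately have "((\<lambda>\<delta>. ln (real (mesh_count \<delta> F)) / (- ln \<delta>)) \<longlongrightarrow> dim) (at_right 0)"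
    by (rule tendsto_ln_ratio_sandwich)
  then show ?thesis
    using box_dims_eq_if_tendsto one_lt_dim unfolding dim_def by blast
qed

end
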